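(* Let $s,r\in\mathbb{N}$ and let $\mathcal{C}$ be a class of finite graphs such that each $G\in\mathcal{C}$ is obtained from some complete bipartite graph $K_{n,m}$ with $n\le m\le 2^{sn+r}$ by possibly adding new edges (on the same vertex set). Then $\mathcal{C}$ is $\mathrm{MSO}_2$-orderable.
   Context: For $G=\langle V,E\rangle$, $\lceil G\rceil=\langle V\cup E,\mathrm{inc}\rangle$ (universe $V\cup E$, incidence relation). An MSO-formula $\varphi(x,y;Z_0,\dots,Z_{k-1})$ defines an order on a class $\mathcal{K}$ of structures if for every non-empty $\mathfrak{A}\in\mathcal{K}$ there are $P_0,\dots,P_{k-1}\subseteq A$ with $\{(a,b):\mathfrak{A}\models\varphi(a,b;\bar P)\}$ a linear order on $A$. A graph class is $\mathrm{MSO}_2$-orderable if some MSO-formula defines an order on $\{\lceil G\rceil : G\in\mathcal{C}\}$. *)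

theory Defs
  imports Main
begin

type_synonym 'v graph = "'v set \<times> 'v set set"

definition finite_graph :: "'v graph \<Rightarrow> bool" where
  "finite_graph G \<longleftrightarrow> finite (fst G) \<and>
     (\<forall>e \<in> snd G. \<exists>u v. e = {u, v} \<and> u \<noteq> v \<and> u \<in> fst G \<and> v \<in> fst G)"

definition extends_Knm :: "'v graph \<Rightarrow> nat \<Rightarrow> nat \<Rightarrow> bool" where
  "extends_Knm G n m \<longleftrightarrow> (\<exists>A B. A \<inter> B = {} \<and> A \<union> B = fst G \<and>
     card A = n \<and> card B = m \<and> (\<forall>a\<in>A. \<forall>b\<in>B. {a, b} \<in> snd G))"

type_synonym 'a rstructure = "'a set \<times> ('a \<times> 'a) set"

definition incidence :: "'v graph \<Rightarrow> ('v + 'v set) rstructure" where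
  "incidence G = (Inl ` fst G \<union> Inr ` snd G,
                  {(Inl v, Inr e) | v e. v \<in> fst G \<and> e \<in> snd G \<and> v \<in> e})"

datatype mso =
    Rel nat nat
  | Eq nat nat
  | Mem nat nat
  | Neg mso
  | Conj mso mso
  | Ex1 nat mso
  | Ex2 nat mso

fun sat :: "'a rstructure \<Rightarrow> (nat \<Rightarrow> 'a) \<Rightarrow> (nat \<Rightarrow> 'a set) \<Rightarrow> mso \<Rightarrow> bool" where
  "sat S \<alpha> \<beta> (Rel i j) = ((\<alpha> i, \<alpha> j) \<in> snd S)"
| "sat S \<alpha> \<beta> (Eq i j) = (\<alpha> i = \<alpha> j)"
| "sat S \<alpha> \<beta> (Mem i j) = (\<alpha> i \<in> \<beta> j)"
| "sat S \<alpha> \<beta> (Neg \<phi>) = (\<not> sat S \<alpha> \<beta> \<phi>)"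
| "sat S \<alpha> \<beta> (Conj \<phi> \<psi>) = (sat S \<alpha> \<beta> \<phi> \<and> sat S \<alpha> \<beta> \<psi>)"
| "sat S \<alpha> \<beta> (Ex1 i \<phi>) = (\<exists>a \<in> fst S. sat S (\<alpha>(i := a)) \<beta> \<phi>)"
| "sat S \<alpha> \<beta> (Ex2 j \<phi>) = (\<exists>P. P \<subseteq> fst S \<and> sat S \<alpha> (\<beta>(j := P)) \<phi>)"

fun fo_free :: "mso \<Rightarrow> nat set" where
  "fo_free (Rel i j) = {i, j}"
| "fo_free (Eq i j) = {i, j}"
| "fo_free (Mem i j) = {i}"
| "fo_free (Neg \<phi>) = fo_free \<phi>"
| "fo_free (Conj \<phi> \<psi>) = fo_free \<phi> \<union> fo_free \<psi>"
| "fo_free (Ex1 i \<phi>) = fo_free \<phi> - {i}"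
| "fo_free (Ex2 j \<phi>) = fo_free \<phi>"

fun so_free :: "mso \<Rightarrow> nat set" where
  "so_free (Rel i j) = {}"
| "so_free (Eq i j) = {}"
| "so_free (Mem i j) = {j}"
| "so_free (Neg \<phi>) = so_free \<phi>"
| "so_free (Conj \<phi> \<psi>) = so_free \<phi> \<union> so_free \<psi>"
| "so_free (Ex1 i \<phi>) = so_free \<phi>"
| "so_free (Ex2 j \<phi>) = so_free \<phi> - {j}"

definition defines_order :: "mso \<Rightarrow> nat \<Rightarrow> 'a rstructure set \<Rightarrow> bool" where
  "defines_order \<phi> k K \<longleftrightarrow>
     fo_free \<phi> \<subseteq> {0, 1} \<and> so_free \<phi> \<subseteq> {..<k} \<and>
     (\<forall>S \<in> K. fst S \<noteq> {} \<longrightarrow>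
        (\<exists>P :: nat \<Rightarrow> 'a set. (\<forall>i<k. P i \<subseteq> fst S) \<and>
           linear_order_on (fst S)
             {(a, b). a \<in> fst S \<and> b \<in> fst S \<and>
                      sat S (\<lambda>i. if i = 0 then a else b) P \<phi>}))"

definition MSO2_orderable :: "'v graph set \<Rightarrow> bool" where
  "MSO2_orderable C \<longleftrightarrow> (\<exists>\<phi> k. defines_order \<phi> k (incidence ` C))"

end

theory Submission
  imports Defs "HOL-Library.FuncSet"
begin

(* Let G extend K_{n,m} with parts A (|A| = n) and B
   (|B| = m <= 2^(sn+r)). Parameters make the order of the incidence structure
   MSO-definable in three layers:
   - A is linearly ordered by a "staircase" edge set: the i-th vertex of A is joined
     to the B-vertices g i, ..., g (n-1), so inclusion of these neighbourhoods orders A;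
   - since m <= 2^r * (2^n)^s, every b in B gets a distinct code consisting of r bits
     (unary predicates Z_3 .. Z_{r+2}) and s subsets of A (edge sets joining b to
     the chosen subset of A); subsets of A are compared as binary numbers w.r.t. the
     order of A, so B is ordered lexicographically by codes;
   - for any finite graph, a definable vertex order extends to the whole incidence
     structure, comparing edges as binary numbers over their endpoint sets.
   Variable convention: first-order variables 0, 1 are the compared elements; 10-14
   are bound inside the vertex formulas and 20-22 inside the edge formula. *)

definition Or :: "mso \<Rightarrow> mso \<Rightarrow> mso" where "Or a b = Neg (Conj (Neg a) (Neg b))"
definition Imp :: "mso \<Rightarrow> mso \<Rightarrow> mso" where "Imp a b = Neg (Conj a (Neg b))"
definition Iff :: "mso \<Rightarrow> mso \<Rightarrow> mso" where "Iff a b = Conj (Imp a b) (Imp b a)"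
definition All1 :: "nat \<Rightarrow> mso \<Rightarrow> mso" where "All1 i a = Neg (Ex1 i (Neg a))"

lemma sat_derived [simp]:
  "sat S \<alpha> \<beta> (Or a b) = (sat S \<alpha> \<beta> a \<or> sat S \<alpha> \<beta> b)"
  "sat S \<alpha> \<beta> (Imp a b) = (sat S \<alpha> \<beta> a \<longrightarrow> sat S \<alpha> \<beta> b)"
  "sat S \<alpha> \<beta> (Iff a b) = (sat S \<alpha> \<beta> a \<longleftrightarrow> sat S \<alpha> \<beta> b)"
  "sat S \<alpha> \<beta> (All1 i a) = (\<forall>x\<in>fst S. sat S (\<alpha>(i:=x)) \<beta> a)"
  by (auto simp: Or_def Imp_def Iff_def All1_def)

lemma free_derived [simp]:
  "fo_free (Or a b) = fo_free a \<union> fo_free b"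
  "fo_free (Imp a b) = fo_free a \<union> fo_free b"
  "fo_free (Iff a b) = fo_free a \<union> fo_free b"
  "fo_free (All1 i a) = fo_free a - {i}"
  "so_free (Or a b) = so_free a \<union> so_free b"
  "so_free (Imp a b) = so_free a \<union> so_free b"
  "so_free (Iff a b) = so_free a \<union> so_free b"
  "so_free (All1 i a) = so_free a"
  by (auto simp: Or_def Imp_def Iff_def All1_def)

section \<open>Formulas defining sets, relations and numeric keys\<close>

text \<open>A unary formula defines the set X (and a binary formula the relation R) under the
  set parameters \<open>\<beta>\<close>, provided its free variables avoid the variables Bd that it binds
  internally.\<close>

definition defines_set ::
  "'a rstructure \<Rightarrow> (nat \<Rightarrow> 'a set) \<Rightarrow> nat set \<Rightarrow> (nat \<Rightarrow> mso) \<Rightarrow> 'a set \<Rightarrow> bool" where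
  "defines_set S \<beta> Bd \<Phi> X \<longleftrightarrow>
     (\<forall>\<alpha> i. i \<notin> Bd \<longrightarrow> \<alpha> i \<in> fst S \<longrightarrow> (sat S \<alpha> \<beta> (\<Phi> i) \<longleftrightarrow> \<alpha> i \<in> X))"

definition defines_rel ::
  "'a rstructure \<Rightarrow> (nat \<Rightarrow> 'a set) \<Rightarrow> nat set \<Rightarrow> (nat \<Rightarrow> nat \<Rightarrow> mso) \<Rightarrow> ('a \<Rightarrow> 'a \<Rightarrow> bool) \<Rightarrow> bool" where
  "defines_rel S \<beta> Bd \<Phi> R \<longleftrightarrow>
     (\<forall>\<alpha> i j. i \<notin> Bd \<longrightarrow> j \<notin> Bd \<longrightarrow> \<alpha> i \<in> fst S \<longrightarrow> \<alpha> j \<in> fst S \<longrightarrow>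
        (sat S \<alpha> \<beta> (\<Phi> i j) \<longleftrightarrow> R (\<alpha> i) (\<alpha> j)))"

abbreviation defines_key ::
  "'a rstructure \<Rightarrow> (nat \<Rightarrow> 'a set) \<Rightarrow> nat set \<Rightarrow> (nat \<Rightarrow> nat \<Rightarrow> mso) \<Rightarrow> ('a \<Rightarrow> nat) \<Rightarrow> bool" where
  "defines_key S \<beta> Bd \<Phi> k \<equiv> defines_rel S \<beta> Bd \<Phi> (\<lambda>x y. k x \<le> k y)"

lemma defines_setD:
  "defines_set S \<beta> Bd \<Phi> X \<Longrightarrow> i \<notin> Bd \<Longrightarrow> \<alpha> i \<in> fst S \<Longrightarrow> sat S \<alpha> \<beta> (\<Phi> i) \<longleftrightarrow> \<alpha> i \<in> X"
  unfolding defines_set_def by blast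

lemma defines_relD:
  "defines_rel S \<beta> Bd \<Phi> R \<Longrightarrow> i \<notin> Bd \<Longrightarrow> j \<notin> Bd \<Longrightarrow> \<alpha> i \<in> fst S \<Longrightarrow> \<alpha> j \<in> fst S \<Longrightarrow>
     sat S \<alpha> \<beta> (\<Phi> i j) \<longleftrightarrow> R (\<alpha> i) (\<alpha> j)"
  unfolding defines_rel_def by blast

lemma defines_rel_mono: "defines_rel S \<beta> Bd \<Phi> R \<Longrightarrow> Bd \<subseteq> Bd' \<Longrightarrow> defines_rel S \<beta> Bd' \<Phi> R"
  unfolding defines_rel_def by blast

definition binary_formula :: "(nat \<Rightarrow> nat \<Rightarrow> mso) \<Rightarrow> nat set \<Rightarrow> bool" where
  "binary_formula \<Phi> Z \<longleftrightarrow> (\<forall>i j. fo_free (\<Phi> i j) \<subseteq> {i, j} \<and> so_free (\<Phi> i j) \<subseteq> Z)"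

definition mem_cmp :: "nat \<Rightarrow> nat \<Rightarrow> nat \<Rightarrow> mso" where
  "mem_cmp z i j = Imp (Mem i z) (Mem j z)"

lemma defines_key_mem_cmp: "defines_key S \<beta> Bd (mem_cmp z) (\<lambda>x. of_bool (x \<in> \<beta> z))"
  unfolding defines_rel_def mem_cmp_def by simp

lemma binary_formula_mem_cmp: "z \<in> Z \<Longrightarrow> binary_formula (mem_cmp z) Z"
  unfolding binary_formula_def mem_cmp_def by auto

section \<open>Lexicographic combination of keys\<close>

fun lexcomb :: "(nat \<Rightarrow> nat \<Rightarrow> mso) list \<Rightarrow> nat \<Rightarrow> nat \<Rightarrow> mso" where
  "lexcomb [] i j = Eq i i"
| "lexcomb (\<Phi> # \<Phi>s) i j = Or (Neg (\<Phi> j i)) (Conj (\<Phi> i j) (lexcomb \<Phi>s i j))"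

fun lexle :: "('a \<Rightarrow> nat) list \<Rightarrow> 'a \<Rightarrow> 'a \<Rightarrow> bool" where
  "lexle [] x y = True"
| "lexle (k # ks) x y = (k x < k y \<or> (k x \<le> k y \<and> lexle ks x y))"

lemma defines_rel_lexcomb:
  assumes "list_all2 (defines_key S \<beta> Bd) \<Phi>s ks"
  shows "defines_rel S \<beta> Bd (lexcomb \<Phi>s) (lexle ks)"
  using assms
proof (induction \<Phi>s ks rule: list_all2_induct)
  case (Cons \<Phi> \<Phi>s k ks)
  then show ?case
    by (auto simp: defines_rel_def)
qed (simp add: defines_rel_def)

lemma binary_formula_lexcomb:
  "(\<And>\<Phi>. \<Phi> \<in> set \<Phi>s \<Longrightarrow> binary_formula \<Phi> Z) \<Longrightarrow> binary_formula (lexcomb \<Phi>s) Z"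
  unfolding binary_formula_def by (induction \<Phi>s) (auto, blast+)

lemma lexle_refl: "lexle ks x x"
  by (induction ks) auto

lemma lexle_total: "lexle ks x y \<or> lexle ks y x"
  by (induction ks) auto

lemma lexle_trans: "lexle ks x y \<Longrightarrow> lexle ks y z \<Longrightarrow> lexle ks x z"
  by (induction ks) auto

lemma lexle_antisym: "lexle ks x y \<Longrightarrow> lexle ks y x \<Longrightarrow> k \<in> set ks \<Longrightarrow> k x = k y"
  by (induction ks) auto

lemma lexle_linear_order:
  assumes sep: "\<forall>x\<in>X. \<forall>y\<in>X. (\<forall>k\<in>set ks. k x = k y) \<longrightarrow> x = y"
  shows "linear_order_on X {(a, b). a \<in> X \<and> b \<in> X \<and> lexle ks a b}"
  unfolding linear_order_on_def partial_order_on_def preorder_on_def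
    refl_on_def trans_on_def antisym_on_def total_on_def
proof (intro conjI ballI impI)
  fix x y assume "x \<in> X" "y \<in> X" "x \<noteq> y"
  then show "(x, y) \<in> {(a, b). a \<in> X \<and> b \<in> X \<and> lexle ks a b} \<or>
             (y, x) \<in> {(a, b). a \<in> X \<and> b \<in> X \<and> lexle ks a b}"
    using lexle_total[of ks x y] by simp
next
  fix x y assume "(x, y) \<in> {(a, b). a \<in> X \<and> b \<in> X \<and> lexle ks a b}"
    "(y, x) \<in> {(a, b). a \<in> X \<and> b \<in> X \<and> lexle ks a b}"
  then have xy: "x \<in> X" "y \<in> X" "lexle ks x y" "lexle ks y x" by auto
  then have "\<forall>k\<in>set ks. k x = k y" by (metis lexle_antisym)
  with sep xy show "x = y" by blast
qed (auto intro: lexle_refl lexle_trans)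

definition rank :: "('a \<Rightarrow> 'a \<Rightarrow> bool) \<Rightarrow> 'a set \<Rightarrow> 'a \<Rightarrow> nat" where
  "rank R X x = card {z \<in> X. \<not> R x z}"

lemma rank_le_iff:
  assumes fin: "finite X" and total: "\<forall>p\<in>X. \<forall>q\<in>X. R p q \<or> R q p"
    and trans: "\<forall>p\<in>X. \<forall>q\<in>X. \<forall>z\<in>X. R p q \<longrightarrow> R q z \<longrightarrow> R p z"
    and pq: "p \<in> X" "q \<in> X"
  shows "R q p \<longleftrightarrow> rank R X q \<le> rank R X p"
proof
  have upper: "{z \<in> X. \<not> R a z} \<subseteq> {z \<in> X. \<not> R b z}" if "a \<in> X" "b \<in> X" "R a b" for a b
    using trans that by blast
  show "R q p \<Longrightarrow> rank R X q \<le> rank R X p"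
    unfolding rank_def using upper pq fin by (intro card_mono) auto
  assume le: "rank R X q \<le> rank R X p"
  show "R q p"
  proof (rule ccontr)
    assume "\<not> R q p"
    with total pq have "R p q" "R p p" by blast+
    with upper[OF pq] \<open>\<not> R q p\<close> pq have "{z \<in> X. \<not> R p z} \<subset> {z \<in> X. \<not> R q z}"
      by blast
    then have "rank R X p < rank R X q"
      unfolding rank_def using fin by (intro psubset_card_mono) auto
    with le show False by simp
  qed
qed

lemma lexle_rank_le_iff:
  assumes "finite X" "q \<in> X" "p \<in> X"
  shows "lexle ks q p \<longleftrightarrow> rank (lexle ks) X q \<le> rank (lexle ks) X p"
proof (rule rank_le_iff[OF assms(1) _ _ assms(3,2)])
  show "\<forall>p\<in>X. \<forall>q\<in>X. lexle ks p q \<or> lexle ks q p"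
    by (simp add: lexle_total)
  show "\<forall>p\<in>X. \<forall>q\<in>X. \<forall>z\<in>X. lexle ks p q \<longrightarrow> lexle ks q z \<longrightarrow> lexle ks p z"
    by (auto elim: lexle_trans[rotated])
qed

lemma inj_on_lexle_rank:
  assumes "finite X" and sep: "\<forall>x\<in>X. \<forall>y\<in>X. (\<forall>k\<in>set ks. k x = k y) \<longrightarrow> x = y"
  shows "inj_on (rank (lexle ks) X) X"
proof
  fix p q assume pq: "p \<in> X" "q \<in> X" "rank (lexle ks) X p = rank (lexle ks) X q"
  then have "lexle ks p q" "lexle ks q p"
    using lexle_rank_le_iff[OF assms(1)] by auto
  then have "\<forall>k\<in>set ks. k p = k q" by (metis lexle_antisym)
  then show "p = q" using sep pq by blast
qed

section \<open>Binary numbers\<close>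

lemma pow2_sum_less:
  assumes "finite X" "finite Y" "p \<in> X" "p \<notin> Y" "\<forall>q>p. q \<in> X \<longleftrightarrow> q \<in> Y"
  shows "(\<Sum>i\<in>Y. (2::nat) ^ i) < (\<Sum>i\<in>X. 2 ^ i)"
proof -
  define H where "H = {q \<in> X. p < q}"
  define L where "L = {q \<in> Y. q < p}"
  have fin: "finite H" "finite L" using assms(1,2) unfolding H_def L_def by simp_all
  have "Y = H \<union> L"
    using assms(4,5) unfolding H_def L_def by (auto simp: not_less_iff_gr_or_eq)
  moreover have "H \<inter> L = {}" unfolding H_def L_def by auto
  ultimately have sumY: "(\<Sum>i\<in>Y. (2::nat) ^ i) = (\<Sum>i\<in>H. 2 ^ i) + (\<Sum>i\<in>L. 2 ^ i)"
    using sum.union_disjoint[OF fin] by simp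
  have "(\<Sum>i\<in>L. (2::nat) ^ i) \<le> (\<Sum>i<p. 2 ^ i)"
    using fin by (intro sum_mono2) (auto simp: L_def)
  also have "(\<Sum>i<p. (2::nat) ^ i) < 2 ^ p"
    by (induction p) auto
  finally have sumL: "(\<Sum>i\<in>L. (2::nat) ^ i) < 2 ^ p" .
  have "p \<notin> H" unfolding H_def by auto
  note sumY
  also have "(\<Sum>i\<in>H. (2::nat) ^ i) + (\<Sum>i\<in>L. 2 ^ i) < (\<Sum>i\<in>H. 2 ^ i) + 2 ^ p"
    using sumL by simp
  also have "\<dots> = (\<Sum>i\<in>insert p H. 2 ^ i)"
    using fin(1) \<open>p \<notin> H\<close> by simp
  also have "\<dots> \<le> (\<Sum>i\<in>X. 2 ^ i)"
    using assms(1,3) by (intro sum_mono2) (auto simp: H_def)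
  finally show ?thesis .
qed

lemma highest_difference:
  fixes X Y :: "nat set"
  assumes "finite X" "finite Y" "X \<noteq> Y"
  obtains p where "p \<in> X \<longleftrightarrow> p \<notin> Y" "\<forall>q>p. q \<in> X \<longleftrightarrow> q \<in> Y"
proof -
  define D where "D = (X - Y) \<union> (Y - X)"
  have D: "finite D" "D \<noteq> {}" using assms unfolding D_def by auto
  have "Max D \<in> X \<longleftrightarrow> Max D \<notin> Y" using Max_in[OF D] unfolding D_def by blast
  moreover have "\<forall>q>Max D. q \<in> X \<longleftrightarrow> q \<in> Y"
    using Max_ge[OF D(1)] leD unfolding D_def by blast
  ultimately show thesis by (rule that)
qed

lemma pow2_sum_less_iff:
  assumes "finite X" "finite Y"
  shows "(\<Sum>i\<in>Y. (2::nat) ^ i) < (\<Sum>i\<in>X. 2 ^ i) \<longleftrightarrow> (\<exists>p\<in>X. p \<notin> Y \<and> (\<forall>q>p. q \<in> X \<longleftrightarrow> q \<in> Y))"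
proof
  assume less: "(\<Sum>i\<in>Y. (2::nat) ^ i) < (\<Sum>i\<in>X. 2 ^ i)"
  then have "X \<noteq> Y" by auto
  then obtain p where p: "p \<in> X \<longleftrightarrow> p \<notin> Y" "\<forall>q>p. q \<in> X \<longleftrightarrow> q \<in> Y"
    using highest_difference[OF assms] by blast
  have "p \<in> X"
  proof (rule ccontr)
    assume "p \<notin> X"
    with p have "p \<in> Y" "\<forall>q>p. q \<in> Y \<longleftrightarrow> q \<in> X" by auto
    then have "(\<Sum>i\<in>X. (2::nat) ^ i) < (\<Sum>i\<in>Y. 2 ^ i)"
      using pow2_sum_less[OF assms(2,1)] \<open>p \<notin> X\<close> by blast
    with less show False by simp
  qed
  with p show "\<exists>p\<in>X. p \<notin> Y \<and> (\<forall>q>p. q \<in> X \<longleftrightarrow> q \<in> Y)" by blast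
next
  assume "\<exists>p\<in>X. p \<notin> Y \<and> (\<forall>q>p. q \<in> X \<longleftrightarrow> q \<in> Y)"
  then show "(\<Sum>i\<in>Y. (2::nat) ^ i) < (\<Sum>i\<in>X. 2 ^ i)"
    using pow2_sum_less[OF assms] by blast
qed

lemma pow2_sum_inj:
  assumes "finite X" "finite Y" "(\<Sum>i\<in>X. (2::nat) ^ i) = (\<Sum>i\<in>Y. 2 ^ i)"
  shows "X = Y"
proof (rule ccontr)
  assume "X \<noteq> Y"
  then obtain p where p: "p \<in> X \<longleftrightarrow> p \<notin> Y" "\<forall>q>p. q \<in> X \<longleftrightarrow> q \<in> Y"
    using highest_difference[OF assms(1,2)] by blast
  show False
  proof (cases "p \<in> X")
    case True
    then show False using pow2_sum_less[OF assms(1,2)] p assms(3) by auto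
  next
    case False
    then show False using pow2_sum_less[OF assms(2,1)] p assms(3) by auto
  qed
qed

definition binval :: "('b \<Rightarrow> nat) \<Rightarrow> 'b set \<Rightarrow> ('a \<Rightarrow> 'b \<Rightarrow> bool) \<Rightarrow> 'a \<Rightarrow> nat" where
  "binval kp X dig x = (\<Sum>p\<in>{p \<in> X. dig x p}. 2 ^ kp p)"

lemma binval_image:
  assumes "inj_on kp X"
  shows "binval kp X dig x = (\<Sum>i\<in>kp ` {p \<in> X. dig x p}. 2 ^ i)"
  using assms unfolding binval_def by (subst sum.reindex) (auto intro: inj_on_subset)

lemma binval_less_iff:
  assumes fin: "finite X" and inj: "inj_on kp X"
  shows "binval kp X dig y < binval kp X dig x \<longleftrightarrow>
    (\<exists>a\<in>X. dig x a \<and> \<not> dig y a \<and> (\<forall>b\<in>X. kp a < kp b \<longrightarrow> (dig x b \<longleftrightarrow> dig y b)))"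
proof -
  let ?X = "kp ` {p \<in> X. dig x p}" and ?Y = "kp ` {p \<in> X. dig y p}"
  have memX: "kp a \<in> ?X \<longleftrightarrow> dig x a" and memY: "kp a \<in> ?Y \<longleftrightarrow> dig y a" if "a \<in> X" for a
    using inj that by (auto dest: inj_onD)
  have "binval kp X dig y < binval kp X dig x \<longleftrightarrow> (\<exists>i\<in>?X. i \<notin> ?Y \<and> (\<forall>q>i. q \<in> ?X \<longleftrightarrow> q \<in> ?Y))"
    unfolding binval_image[OF inj] using fin by (intro pow2_sum_less_iff) auto
  also have "\<dots> \<longleftrightarrow> (\<exists>a\<in>X. dig x a \<and> \<not> dig y a \<and> (\<forall>b\<in>X. kp a < kp b \<longrightarrow> (dig x b \<longleftrightarrow> dig y b)))"
  proof
    assume "\<exists>i\<in>?X. i \<notin> ?Y \<and> (\<forall>q>i. q \<in> ?X \<longleftrightarrow> q \<in> ?Y)"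
    then obtain a where "a \<in> X" "dig x a" "kp a \<notin> ?Y" "\<forall>q>kp a. q \<in> ?X \<longleftrightarrow> q \<in> ?Y"
      by blast
    then show "\<exists>a\<in>X. dig x a \<and> \<not> dig y a \<and> (\<forall>b\<in>X. kp a < kp b \<longrightarrow> (dig x b \<longleftrightarrow> dig y b))"
      using memX memY by (intro bexI[of _ a]) auto
  next
    assume "\<exists>a\<in>X. dig x a \<and> \<not> dig y a \<and> (\<forall>b\<in>X. kp a < kp b \<longrightarrow> (dig x b \<longleftrightarrow> dig y b))"
    then obtain a where a: "a \<in> X" "dig x a" "\<not> dig y a"
      and above: "\<forall>b\<in>X. kp a < kp b \<longrightarrow> (dig x b \<longleftrightarrow> dig y b)" by blast
    have "q \<in> ?X \<longleftrightarrow> q \<in> ?Y" if "kp a < q" for q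
      using above that memX memY by blast
    then show "\<exists>i\<in>?X. i \<notin> ?Y \<and> (\<forall>q>i. q \<in> ?X \<longleftrightarrow> q \<in> ?Y)"
      using a memX memY by blast
  qed
  finally show ?thesis .
qed

lemma binval_inj:
  assumes "finite X" "inj_on kp X" "binval kp X dig x = binval kp X dig y"
  shows "{p \<in> X. dig x p} = {p \<in> X. dig y p}"
proof -
  have "kp ` {p \<in> X. dig x p} = kp ` {p \<in> X. dig y p}"
    using assms by (intro pow2_sum_inj) (auto simp: binval_image)
  then show ?thesis
    using inj_on_image_eq_iff[OF assms(2)] by blast
qed

text \<open>The MSO counterpart of binval: x is at most y unless some position p (ranging
  over Pos, bound to variable p) is a digit of x but not of y and all positions that
  are higher in the order Ord (bound to q) agree.\<close>

definition bincmp ::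
  "(nat \<Rightarrow> mso) \<Rightarrow> (nat \<Rightarrow> nat \<Rightarrow> mso) \<Rightarrow> (nat \<Rightarrow> nat \<Rightarrow> mso) \<Rightarrow> nat \<Rightarrow> nat \<Rightarrow> nat \<Rightarrow> nat \<Rightarrow> mso" where
  "bincmp Pos Ord Bit p q i j =
     Neg (Ex1 p (Conj (Pos p) (Conj (Bit i p) (Conj (Neg (Bit j p))
       (All1 q (Imp (Conj (Pos q) (Neg (Ord q p))) (Iff (Bit i q) (Bit j q))))))))"

lemma defines_key_bincmp:
  assumes pos: "defines_set S \<beta> Bd Pos X" and X: "X \<subseteq> fst S" "finite X"
    and dig: "defines_rel S \<beta> Bd Bit dig"
    and ord: "defines_rel S \<beta> Bd Ord R" and R: "\<forall>a\<in>X. \<forall>b\<in>X. R a b \<longleftrightarrow> kp a \<le> kp b"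
    and inj: "inj_on kp X" and pq: "p \<notin> Bd" "q \<notin> Bd" "p \<noteq> q"
  shows "defines_key S \<beta> (insert p (insert q Bd)) (bincmp Pos Ord Bit p q) (binval kp X dig)"
  unfolding defines_rel_def
proof (intro allI impI)
  fix \<alpha> i j
  assume ij: "i \<notin> insert p (insert q Bd)" "j \<notin> insert p (insert q Bd)" "\<alpha> i \<in> fst S" "\<alpha> j \<in> fst S"
  let ?x = "\<alpha> i" and ?y = "\<alpha> j"
  have "sat S \<alpha> \<beta> (bincmp Pos Ord Bit p q i j) \<longleftrightarrow>
      \<not> (\<exists>a\<in>fst S. a \<in> X \<and> dig ?x a \<and> \<not> dig ?y a \<and>
          (\<forall>b\<in>fst S. b \<in> X \<and> \<not> R b a \<longrightarrow> (dig ?x b \<longleftrightarrow> dig ?y b)))"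
    using ij pq by (simp add: bincmp_def defines_setD[OF pos] defines_relD[OF dig] defines_relD[OF ord])
  also have "\<dots> \<longleftrightarrow> \<not> (\<exists>a\<in>X. dig ?x a \<and> \<not> dig ?y a \<and>
          (\<forall>b\<in>X. kp a < kp b \<longrightarrow> (dig ?x b \<longleftrightarrow> dig ?y b)))"
  proof -
    have "\<not> R b a \<longleftrightarrow> kp a < kp b" if "a \<in> X" "b \<in> X" for a b
      using R that by (auto simp: not_le)
    then show ?thesis using X(1) by blast
  qed
  also have "\<dots> \<longleftrightarrow> binval kp X dig ?x \<le> binval kp X dig ?y"
    using binval_less_iff[OF X(2) inj, of dig ?y ?x] by linarith
  finally show "sat S \<alpha> \<beta> (bincmp Pos Ord Bit p q i j) \<longleftrightarrow> binval kp X dig ?x \<le> binval kp X dig ?y" .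
qed

lemma binary_formula_bincmp:
  assumes "\<And>i. fo_free (Pos i) \<subseteq> {i} \<and> so_free (Pos i) \<subseteq> Z"
    "binary_formula Ord Z" "binary_formula Bit Z"
  shows "binary_formula (bincmp Pos Ord Bit p q) Z"
  using assms unfolding binary_formula_def bincmp_def by (simp; blast)

section \<open>From a vertex order to an order of the incidence structure\<close>

lemma incidence_simps:
  "fst (incidence (V, E)) = Inl ` V \<union> Inr ` E"
  "(x, y) \<in> snd (incidence (V, E)) \<longleftrightarrow> (\<exists>v e. x = Inl v \<and> y = Inr e \<and> v \<in> V \<and> e \<in> E \<and> v \<in> e)"
  by (auto simp: incidence_def)

lemma finite_graph_edge:
  "finite_graph (V, E) \<Longrightarrow> e \<in> E \<Longrightarrow> \<exists>u v. e = {u, v} \<and> u \<noteq> v \<and> u \<in> V \<and> v \<in> V"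
  by (simp add: finite_graph_def)

lemma finite_graph_vertices: "finite_graph (V, E) \<Longrightarrow> finite V"
  by (simp add: finite_graph_def)

text \<open>Vertices are the elements without incident predecessor.\<close>

definition is_vertex :: "nat \<Rightarrow> mso" where
  "is_vertex x = Neg (Ex1 22 (Rel 22 x))"

lemma defines_set_is_vertex:
  assumes "finite_graph (V, E)"
  shows "defines_set (incidence (V, E)) \<beta> {22} is_vertex (Inl ` V)"
  unfolding defines_set_def
proof (intro allI impI)
  fix \<alpha> :: "nat \<Rightarrow> 'a + 'a set" and i
  assume i: "i \<notin> {22}" "\<alpha> i \<in> fst (incidence (V, E))"
  have "sat (incidence (V, E)) \<alpha> \<beta> (is_vertex i) \<longleftrightarrow>
      \<not> (\<exists>z\<in>fst (incidence (V, E)). (z, \<alpha> i) \<in> snd (incidence (V, E)))"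
    using i(1) by (simp add: is_vertex_def)
  also have "\<dots> \<longleftrightarrow> \<alpha> i \<in> Inl ` V"
  proof (cases "\<alpha> i")
    case (Inr e)
    with i(2) have "e \<in> E" by (auto simp: incidence_simps)
    then obtain u v where "e = {u, v}" "u \<in> V" using finite_graph_edge[OF assms] by blast
    with Inr \<open>e \<in> E\<close> show ?thesis by (auto simp: incidence_simps)
  qed (use i(2) in \<open>auto simp: incidence_simps\<close>)
  finally show "sat (incidence (V, E)) \<alpha> \<beta> (is_vertex i) \<longleftrightarrow> \<alpha> i \<in> Inl ` V" .
qed

lemma defines_rel_incident:
  "defines_rel (incidence (V, E)) \<beta> Bd (\<lambda>x p. Rel p x) (\<lambda>x p. (p, x) \<in> snd (incidence (V, E)))"
  unfolding defines_rel_def by simp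

text \<open>Given vertex blocks, edges are compared as binary numbers over their endpoint
  sets, positions being ranked by the lexicographic vertex order; this edge key
  precedes the vertex keys, so all vertices (edge key 0) come before all edges.\<close>

definition edge_cmp :: "(nat \<Rightarrow> nat \<Rightarrow> mso) \<Rightarrow> nat \<Rightarrow> nat \<Rightarrow> mso" where
  "edge_cmp Ord = bincmp is_vertex Ord (\<lambda>x p. Rel p x) 20 21"

definition incidence_order :: "(nat \<Rightarrow> nat \<Rightarrow> mso) list \<Rightarrow> mso" where
  "incidence_order \<Phi>s = lexcomb (edge_cmp (lexcomb \<Phi>s) # \<Phi>s) 0 1"

definition edge_key :: "'a graph \<Rightarrow> ('a + 'a set \<Rightarrow> nat) list \<Rightarrow> 'a + 'a set \<Rightarrow> nat" where
  "edge_key G ks = binval (rank (lexle ks) (Inl ` fst G)) (Inl ` fst G)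
     (\<lambda>x p. (p, x) \<in> snd (incidence G))"

lemma defines_key_edge_cmp:
  assumes G: "finite_graph (V, E)" and blocks: "list_all2 (defines_key (incidence (V, E)) \<beta> Bd) \<Phi>s ks"
    and sep: "\<forall>x\<in>Inl ` V. \<forall>y\<in>Inl ` V. (\<forall>k\<in>set ks. k x = k y) \<longrightarrow> x = y"
    and Bd: "20 \<notin> Bd" "21 \<notin> Bd"
  shows "defines_key (incidence (V, E)) \<beta> (insert 20 (insert 21 (insert 22 Bd)))
           (edge_cmp (lexcomb \<Phi>s)) (edge_key (V, E) ks)"
proof -
  have finV: "finite (Inl ` V)" using finite_graph_vertices[OF G] by simp
  show ?thesis
    unfolding edge_key_def edge_cmp_def fst_conv
  proof (rule defines_key_bincmp)
    show "defines_set (incidence (V, E)) \<beta> (insert 22 Bd) is_vertex (Inl ` V)"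
      using defines_set_is_vertex[OF G] unfolding defines_set_def by simp
    show "defines_rel (incidence (V, E)) \<beta> (insert 22 Bd) (lexcomb \<Phi>s) (lexle ks)"
      by (rule defines_rel_mono[OF defines_rel_lexcomb[OF blocks]]) auto
    show "\<forall>a\<in>Inl ` V. \<forall>b\<in>Inl ` V. lexle ks a b \<longleftrightarrow> rank (lexle ks) (Inl ` V) a \<le> rank (lexle ks) (Inl ` V) b"
    proof (intro ballI)
      fix a b :: "'a + 'a set" assume "a \<in> Inl ` V" "b \<in> Inl ` V"
      then show "lexle ks a b \<longleftrightarrow> rank (lexle ks) (Inl ` V) a \<le> rank (lexle ks) (Inl ` V) b"
        by (rule lexle_rank_le_iff[OF finV])
    qed
    show "inj_on (rank (lexle ks) (Inl ` V)) (Inl ` V)"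
      using inj_on_lexle_rank[OF finV sep] .
    show "defines_rel (incidence (V, E)) \<beta> (insert 22 Bd) (\<lambda>x p. Rel p x)
        (\<lambda>x p. (p, x) \<in> snd (incidence (V, E)))"
      by (rule defines_rel_incident)
    show "Inl ` V \<subseteq> fst (incidence (V, E))" by (simp add: incidence_simps)
    show "finite (Inl ` V)" by (rule finV)
    show "20 \<notin> insert 22 Bd" "21 \<notin> insert 22 Bd" using Bd by simp_all
  qed simp
qed

lemma incident_vertices:
  assumes "finite_graph (V, E)"
  shows "{p \<in> Inl ` V. (p, Inl v) \<in> snd (incidence (V, E))} = {}"
    and "e \<in> E \<Longrightarrow> {p \<in> Inl ` V. (p, Inr e) \<in> snd (incidence (V, E))} = Inl ` e"
proof -
  show "{p \<in> Inl ` V. (p, Inl v) \<in> snd (incidence (V, E))} = {}"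
    by (simp add: incidence_simps)
  assume "e \<in> E"
  moreover obtain u w where "e = {u, w}" "u \<in> V" "w \<in> V"
    using finite_graph_edge[OF assms \<open>e \<in> E\<close>] by blast
  ultimately show "{p \<in> Inl ` V. (p, Inr e) \<in> snd (incidence (V, E))} = Inl ` e"
    by (auto simp: incidence_simps)
qed

lemma incidence_separation:
  assumes G: "finite_graph (V, E)"
    and sep: "\<forall>x\<in>Inl ` V. \<forall>y\<in>Inl ` V. (\<forall>k\<in>set ks. k x = k y) \<longrightarrow> x = y"
    and xy: "x \<in> fst (incidence (V, E))" "y \<in> fst (incidence (V, E))"
    and keys: "\<forall>k\<in>set (edge_key (V, E) ks # ks). k x = k y"
  shows "x = y"
proof -
  let ?D = "\<lambda>z. {p \<in> Inl ` V. (p, z) \<in> snd (incidence (V, E))}"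
  have finV: "finite (Inl ` V)" using finite_graph_vertices[OF G] by simp
  have "edge_key (V, E) ks x = edge_key (V, E) ks y" using keys by simp
  then have D: "?D x = ?D y"
    unfolding edge_key_def fst_conv by (rule binval_inj[OF finV inj_on_lexle_rank[OF finV sep]])
  have edge_D: "?D (Inr e) = Inl ` e" "?D (Inr e) \<noteq> {}" if "e \<in> E" for e
    using incident_vertices(2)[OF G that] finite_graph_edge[OF G that] by auto
  show "x = y"
  proof (cases x; cases y)
    fix v w assume "x = Inl v" "y = Inl w"
    then show "x = y" using sep keys xy by (auto simp: incidence_simps)
  next
    fix v e assume "x = Inl v" "y = Inr e"
    then have "e \<in> E" "?D x = {}"
      using xy incident_vertices(1)[OF G] by (auto simp: incidence_simps)
    moreover have "?D y \<noteq> {}"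
      using edge_D(2)[OF \<open>e \<in> E\<close>] unfolding \<open>y = Inr e\<close> .
    ultimately show "x = y" using D by argo
  next
    fix e v assume "x = Inr e" "y = Inl v"
    then have "e \<in> E" "?D y = {}"
      using xy incident_vertices(1)[OF G] by (auto simp: incidence_simps)
    moreover have "?D x \<noteq> {}"
      using edge_D(2)[OF \<open>e \<in> E\<close>] unfolding \<open>x = Inr e\<close> .
    ultimately show "x = y" using D by argo
  next
    fix e e' assume "x = Inr e" "y = Inr e'"
    moreover have "e \<in> E" "e' \<in> E" using xy calculation by (auto simp: incidence_simps)
    then have "Inl ` e = (Inl ` e' :: ('a + 'a set) set)"
      using D edge_D(1)[OF \<open>e \<in> E\<close>, folded \<open>x = Inr e\<close>]
        edge_D(1)[OF \<open>e' \<in> E\<close>, folded \<open>y = Inr e'\<close>] by argo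
    then show "x = y" using \<open>x = Inr e\<close> \<open>y = Inr e'\<close> by (simp add: inj_image_eq_iff)
  qed
qed

theorem incidence_order_linear:
  assumes G: "finite_graph (V, E)"
    and blocks: "list_all2 (defines_key (incidence (V, E)) \<beta> Bd) \<Phi>s ks"
    and sep: "\<forall>x\<in>Inl ` V. \<forall>y\<in>Inl ` V. (\<forall>k\<in>set ks. k x = k y) \<longrightarrow> x = y"
    and Bd: "0 \<notin> Bd" "1 \<notin> Bd" "20 \<notin> Bd" "21 \<notin> Bd" "22 \<notin> Bd"
  defines "U \<equiv> fst (incidence (V, E))"
  shows "linear_order_on U
           {(a, b). a \<in> U \<and> b \<in> U \<and> sat (incidence (V, E)) (\<lambda>i. if i = 0 then a else b) \<beta> (incidence_order \<Phi>s)}"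
proof -
  let ?Bd = "insert 20 (insert 21 (insert 22 Bd))"
  have "list_all2 (defines_key (incidence (V, E)) \<beta> ?Bd) \<Phi>s ks"
    using blocks by (rule list_all2_mono) (auto elim: defines_rel_mono)
  then have "list_all2 (defines_key (incidence (V, E)) \<beta> ?Bd)
      (edge_cmp (lexcomb \<Phi>s) # \<Phi>s) (edge_key (V, E) ks # ks)"
    using defines_key_edge_cmp[OF G blocks sep Bd(3,4)] by simp
  then have order: "defines_rel (incidence (V, E)) \<beta> ?Bd (lexcomb (edge_cmp (lexcomb \<Phi>s) # \<Phi>s))
      (lexle (edge_key (V, E) ks # ks))"
    by (rule defines_rel_lexcomb)
  have "sat (incidence (V, E)) (\<lambda>i. if i = 0 then a else b) \<beta> (incidence_order \<Phi>s)
      \<longleftrightarrow> lexle (edge_key (V, E) ks # ks) a b" if "a \<in> U" "b \<in> U" for a b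
    unfolding incidence_order_def using defines_relD[OF order, of 0 1] that Bd by (simp add: U_def)
  then have "{(a, b). a \<in> U \<and> b \<in> U \<and> sat (incidence (V, E)) (\<lambda>i. if i = 0 then a else b) \<beta> (incidence_order \<Phi>s)}
      = {(a, b). a \<in> U \<and> b \<in> U \<and> lexle (edge_key (V, E) ks # ks) a b}"
    by auto
  moreover have "linear_order_on U {(a, b). a \<in> U \<and> b \<in> U \<and> lexle (edge_key (V, E) ks # ks) a b}"
    by (rule lexle_linear_order) (use incidence_separation[OF G sep] in \<open>simp add: U_def\<close>)
  ultimately show ?thesis by simp
qed

lemma incidence_order_free:
  assumes "\<And>\<Phi>. \<Phi> \<in> set \<Phi>s \<Longrightarrow> binary_formula \<Phi> Z"
  shows "fo_free (incidence_order \<Phi>s) \<subseteq> {0, 1}" "so_free (incidence_order \<Phi>s) \<subseteq> Z"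
proof -
  have "binary_formula (edge_cmp (lexcomb \<Phi>s)) Z"
    unfolding edge_cmp_def
  proof (rule binary_formula_bincmp)
    show "binary_formula (lexcomb \<Phi>s) Z" using assms by (rule binary_formula_lexcomb)
  qed (auto simp: is_vertex_def binary_formula_def)
  then have "binary_formula (lexcomb (edge_cmp (lexcomb \<Phi>s) # \<Phi>s)) Z"
    using assms by (intro binary_formula_lexcomb) auto
  then show "fo_free (incidence_order \<Phi>s) \<subseteq> {0, 1}" "so_free (incidence_order \<Phi>s) \<subseteq> Z"
    unfolding incidence_order_def binary_formula_def by blast+
qed

section \<open>Ordering the vertices of an extension of K_{n,m}\<close>

text \<open>Two elements share an element of the parameter Z_z that both are related to;
  in an incidence structure: two vertices are joined by an edge of Z_z.\<close>

definition shared_edge :: "nat \<Rightarrow> nat \<Rightarrow> nat \<Rightarrow> mso" where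
  "shared_edge z x p = Ex1 12 (Conj (Mem 12 z) (Conj (Rel x 12) (Rel p 12)))"

definition shares_edge :: "'a rstructure \<Rightarrow> 'a set \<Rightarrow> 'a \<Rightarrow> 'a \<Rightarrow> bool" where
  "shares_edge S Z x p \<longleftrightarrow> (\<exists>e\<in>fst S. e \<in> Z \<and> (x, e) \<in> snd S \<and> (p, e) \<in> snd S)"

lemma defines_rel_shared_edge:
  "defines_rel S \<beta> {12} (shared_edge z) (shares_edge S (\<beta> z))"
  unfolding defines_rel_def shared_edge_def shares_edge_def by simp

lemma binary_formula_shared_edge: "z \<in> Z \<Longrightarrow> binary_formula (shared_edge z) Z"
  unfolding binary_formula_def shared_edge_def by auto

text \<open>The vertex blocks. stair_cmp compares the B-neighbourhoods of A-vertices along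
  the staircase edges Z_2 (Z_1 = A); mem_cmp z reads the code bit Z_z; subset_cmp z
  compares the A-neighbourhoods along the coded edges Z_z as binary numbers.\<close>

definition stair_cmp :: "nat \<Rightarrow> nat \<Rightarrow> mso" where
  "stair_cmp i j = All1 10 (Imp
     (Conj (Neg (Mem 10 1)) (Conj (Mem i 1) (Ex1 11 (Conj (Mem 11 2) (Conj (Rel i 11) (Rel 10 11))))))
     (Conj (Mem j 1) (Ex1 11 (Conj (Mem 11 2) (Conj (Rel j 11) (Rel 10 11))))))"

definition subset_cmp :: "nat \<Rightarrow> nat \<Rightarrow> nat \<Rightarrow> mso" where
  "subset_cmp z = bincmp (\<lambda>x. Mem x 1) stair_cmp (shared_edge z) 13 14"

definition vertex_blocks :: "nat \<Rightarrow> nat \<Rightarrow> (nat \<Rightarrow> nat \<Rightarrow> mso) list" where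
  "vertex_blocks r s = stair_cmp # map mem_cmp [3..<3 + r] @ map subset_cmp [3 + r..<3 + r + s]"

lemma binary_formula_stair_cmp: "binary_formula stair_cmp {..<3 + r + s}"
  unfolding binary_formula_def stair_cmp_def by auto

lemma vertex_blocks_binary: "\<Phi> \<in> set (vertex_blocks r s) \<Longrightarrow> binary_formula \<Phi> {..<3 + r + s}"
proof -
  have "binary_formula (subset_cmp z) {..<3 + r + s}" if "z < 3 + r + s" for z
    unfolding subset_cmp_def
    by (rule binary_formula_bincmp) (use that in \<open>auto intro: binary_formula_stair_cmp binary_formula_shared_edge\<close>)
  moreover have "binary_formula (mem_cmp z) {..<3 + r + s}" if "z < 3 + r" for z
    using that by (intro binary_formula_mem_cmp) simp
  ultimately show "\<Phi> \<in> set (vertex_blocks r s) \<Longrightarrow> binary_formula \<Phi> {..<3 + r + s}"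
    unfolding vertex_blocks_def using binary_formula_stair_cmp by auto
qed

locale coded_bipartite =
  fixes V :: "'v set" and E :: "'v set set" and A B :: "'v set" and n s r :: nat
    and f g :: "nat \<Rightarrow> 'v" and code :: "'v \<Rightarrow> nat set \<times> (nat \<Rightarrow> 'v set)"
  assumes graph: "finite_graph (V, E)"
    and parts: "A \<inter> B = {}" "A \<union> B = V"
    and complete: "\<forall>a\<in>A. \<forall>b\<in>B. {a, b} \<in> E"
    and enum_A: "bij_betw f {0..<n} A"
    and inj_g: "inj_on g {0..<n}" and g_B: "g ` {0..<n} \<subseteq> B"
    and inj_code: "inj_on code B" and code_B: "code ` B \<subseteq> Pow {..<r} \<times> ({..<s} \<rightarrow>\<^sub>E Pow A)"
begin

abbreviation I :: "('v + 'v set) rstructure" where "I \<equiv> incidence (V, E)"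

definition stair_edges :: "'v set set" where
  "stair_edges = {{f i, g j} | i j. i \<le> j \<and> j < n}"

definition coded_edges :: "nat \<Rightarrow> 'v set set" where
  "coded_edges t = {{a, b} | a b. a \<in> A \<and> b \<in> B \<and> a \<in> snd (code b) t}"

definition params :: "nat \<Rightarrow> ('v + 'v set) set" where
  "params z =
     (if z = 1 then Inl ` A
      else if z = 2 then Inr ` stair_edges
      else if 3 \<le> z \<and> z < 3 + r then Inl ` {b \<in> B. z - 3 \<in> fst (code b)}
      else if 3 + r \<le> z \<and> z < 3 + r + s then Inr ` coded_edges (z - 3 - r)
      else {})"

lemma params_subset: "params z \<subseteq> fst I"
proof -
  have "f i \<in> A" "g j \<in> B" if "i \<le> j" "j < n" for i j
    using enum_A g_B that unfolding bij_betw_def by auto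
  then have "stair_edges \<subseteq> E" using complete unfolding stair_edges_def by auto
  moreover have "coded_edges t \<subseteq> E" for t using complete unfolding coded_edges_def by auto
  moreover have "A \<subseteq> V" "B \<subseteq> V" using parts by auto
  ultimately have "Inl ` A \<subseteq> fst I" "Inr ` stair_edges \<subseteq> fst I"
    "Inl ` {b \<in> B. j \<in> fst (code b)} \<subseteq> fst I" "Inr ` coded_edges t \<subseteq> fst I" for j t
    unfolding incidence_simps by blast+
  then show ?thesis unfolding params_def by (simp split: if_split)
qed

lemma params_simps:
  "params 1 = Inl ` A" "params (Suc 0) = Inl ` A" "params 2 = Inr ` stair_edges"
  "j < r \<Longrightarrow> params (3 + j) = Inl ` {b \<in> B. j \<in> fst (code b)}"
  "t < s \<Longrightarrow> params (3 + r + t) = Inr ` coded_edges t"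
  by (simp_all add: params_def)

lemma A_enum: "A = f ` {0..<n}" and inj_f: "inj_on f {0..<n}"
  using enum_A by (simp_all add: bij_betw_def)

text \<open>The staircase neighbourhood of an A-vertex: the i-th vertex of A sees
  g i, ..., g (n-1); these sets are nested, so their sizes order A.\<close>

definition stair_nbrs :: "'v + 'v set \<Rightarrow> ('v + 'v set) set" where
  "stair_nbrs x = {b \<in> fst I. b \<notin> params 1 \<and> x \<in> params 1 \<and> shares_edge I (params 2) x b}"

lemma defines_rel_stair_cmp:
  "defines_rel I params {10, 11} stair_cmp (\<lambda>x y. stair_nbrs x \<subseteq> stair_nbrs y)"
  unfolding defines_rel_def stair_nbrs_def shares_edge_def
proof (intro allI impI)
  fix \<alpha> :: "nat \<Rightarrow> 'v + 'v set" and i j :: nat assume "i \<notin> {10, 11}" "j \<notin> {10, 11}"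
  then show "sat I \<alpha> params (stair_cmp i j) \<longleftrightarrow>
      {b \<in> fst I. b \<notin> params 1 \<and> \<alpha> i \<in> params 1 \<and> (\<exists>e\<in>fst I. e \<in> params 2 \<and> (\<alpha> i, e) \<in> snd I \<and> (b, e) \<in> snd I)}
      \<subseteq> {b \<in> fst I. b \<notin> params 1 \<and> \<alpha> j \<in> params 1 \<and> (\<exists>e\<in>fst I. e \<in> params 2 \<and> (\<alpha> j, e) \<in> snd I \<and> (b, e) \<in> snd I)}"
    by (simp add: stair_cmp_def) blast
qed

lemma stair_nbrs_enum:
  assumes "i < n"
  shows "stair_nbrs (Inl (f i)) = Inl ` g ` {i..<n}"
proof
  have fi: "f i \<in> A" using A_enum assms by auto
  show "stair_nbrs (Inl (f i)) \<subseteq> Inl ` g ` {i..<n}"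
  proof
    fix b assume "b \<in> stair_nbrs (Inl (f i))"
    then obtain w i' j where b: "b = Inl w" "w \<notin> A" "w \<in> {f i', g j}" "f i \<in> {f i', g j}" "i' \<le> j" "j < n"
      unfolding stair_nbrs_def shares_edge_def params_simps stair_edges_def incidence_simps by blast
    have "g j \<in> B" "f i' \<in> A" using g_B A_enum b by auto
    then have "f i = f i'" using b(4) fi parts by auto
    then have "i = i'" using inj_f assms b by (auto dest: inj_onD)
    moreover have "w = g j" using b \<open>f i' \<in> A\<close> by auto
    ultimately show "b \<in> Inl ` g ` {i..<n}" using b by auto
  qed
  show "Inl ` g ` {i..<n} \<subseteq> stair_nbrs (Inl (f i))"
  proof
    fix b :: "'v + 'v set" assume "b \<in> Inl ` g ` {i..<n}"
    then obtain j where j: "b = Inl (g j)" "i \<le> j" "j < n" by auto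
    then have "g j \<in> B" using g_B by auto
    then have gj: "g j \<notin> A" "g j \<in> V" "f i \<in> V" "{f i, g j} \<in> E"
      using parts fi complete by auto
    moreover have "{f i, g j} \<in> stair_edges" using j unfolding stair_edges_def by auto
    ultimately show "b \<in> stair_nbrs (Inl (f i))"
      unfolding stair_nbrs_def shares_edge_def params_simps incidence_simps
      using j fi by (intro CollectI conjI bexI[of _ "Inr {f i, g j}"]) auto
  qed
qed

lemma stair_nbrs_outside: "x \<notin> Inl ` A \<Longrightarrow> stair_nbrs x = {}"
  unfolding stair_nbrs_def params_simps by simp

definition stair_key :: "'v + 'v set \<Rightarrow> nat" where
  "stair_key x = card (stair_nbrs x)"

lemma stair_key_enum: "i < n \<Longrightarrow> stair_key (Inl (f i)) = n - i"
proof -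
  assume "i < n"
  have "inj_on g {i..<n}" using inj_g by (rule inj_on_subset) auto
  then have "card (Inl ` g ` {i..<n} :: ('v + 'v set) set) = n - i"
    by (simp add: card_image inj_on_def)
  then show ?thesis using stair_nbrs_enum[OF \<open>i < n\<close>] by (simp add: stair_key_def)
qed

lemma stair_key_outside: "x \<notin> Inl ` A \<Longrightarrow> stair_key x = 0"
  by (simp add: stair_key_def stair_nbrs_outside)

lemma inj_on_stair_key: "inj_on stair_key (Inl ` A)"
proof
  fix x y assume "x \<in> Inl ` A" "y \<in> Inl ` A" "stair_key x = stair_key y"
  then obtain i j where "i < n" "j < n" "x = Inl (f i)" "y = Inl (f j)" "n - i = n - j"
    using A_enum stair_key_enum by auto
  then have "i = j" by simp
  with \<open>x = Inl (f i)\<close> \<open>y = Inl (f j)\<close> show "x = y" by simp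
qed

lemma stair_nbrs_subset_iff: "stair_nbrs x \<subseteq> stair_nbrs y \<longleftrightarrow> stair_key x \<le> stair_key y"
proof (cases "x \<in> Inl ` A")
  case False
  then show ?thesis by (simp add: stair_nbrs_outside stair_key_outside)
next
  case True
  then obtain i where i: "i < n" "x = Inl (f i)" using A_enum by auto
  then have gi: "Inl (g i) \<in> stair_nbrs x" using stair_nbrs_enum by auto
  show ?thesis
  proof (cases "y \<in> Inl ` A")
    case False
    then show ?thesis using gi i stair_key_enum stair_nbrs_outside stair_key_outside by auto
  next
    case True
    then obtain j where j: "j < n" "y = Inl (f j)" using A_enum by auto
    have "stair_nbrs x \<subseteq> stair_nbrs y \<longleftrightarrow> j \<le> i"
    proof
      assume "stair_nbrs x \<subseteq> stair_nbrs y"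
      with gi have "Inl (g i) \<in> Inl ` g ` {j..<n}" using stair_nbrs_enum j by auto
      then obtain j' where "g i = g j'" "j \<le> j'" "j' < n" by auto
      then show "j \<le> i" using inj_g i by (auto dest: inj_onD)
    qed (use i j stair_nbrs_enum in auto)
    then show ?thesis using stair_key_enum i j by auto
  qed
qed

lemma defines_key_stair_cmp: "defines_key I params {10, 11} stair_cmp stair_key"
  using defines_rel_stair_cmp unfolding defines_rel_def stair_nbrs_subset_iff .

definition subset_key :: "nat \<Rightarrow> 'v + 'v set \<Rightarrow> nat" where
  "subset_key z = binval stair_key (Inl ` A) (shares_edge I (params z))"

lemma finite_A: "finite A"
  using A_enum by simp

lemma defines_key_subset_cmp: "defines_key I params {10..<15} (subset_cmp z) (subset_key z)"
proof (rule defines_rel_mono)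
  show "defines_key I params (insert 13 (insert 14 {10, 11, 12})) (subset_cmp z) (subset_key z)"
    unfolding subset_cmp_def subset_key_def
  proof (rule defines_key_bincmp)
    show "defines_set I params {10, 11, 12} (\<lambda>x. Mem x 1) (Inl ` A)"
      by (simp add: defines_set_def params_simps)
    show "Inl ` A \<subseteq> fst I" using params_subset[of 1] by (simp add: params_simps)
    show "defines_rel I params {10, 11, 12} (shared_edge z) (shares_edge I (params z))"
      by (rule defines_rel_mono[OF defines_rel_shared_edge]) auto
    show "defines_key I params {10, 11, 12} stair_cmp stair_key"
      by (rule defines_rel_mono[OF defines_key_stair_cmp]) auto
  qed (simp_all add: finite_A inj_on_stair_key)
qed auto

definition vertex_keys :: "('v + 'v set \<Rightarrow> nat) list" where
  "vertex_keys = stair_key # map (\<lambda>z x. of_bool (x \<in> params z)) [3..<3 + r]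
     @ map subset_key [3 + r..<3 + r + s]"

lemma vertex_blocks_define_keys:
  "list_all2 (defines_key I params {10..<15}) (vertex_blocks r s) vertex_keys"
proof -
  have "list_all2 (defines_key I params {10..<15}) (map mem_cmp [3..<3 + r])
      (map (\<lambda>z x. of_bool (x \<in> params z)) [3..<3 + r])"
    unfolding list.rel_map list_all2_same using defines_key_mem_cmp by blast
  moreover have "list_all2 (defines_key I params {10..<15}) (map subset_cmp [3 + r..<3 + r + s])
      (map subset_key [3 + r..<3 + r + s])"
    unfolding list.rel_map list_all2_same using defines_key_subset_cmp by blast
  moreover have "defines_key I params {10..<15} stair_cmp stair_key"
    by (rule defines_rel_mono[OF defines_key_stair_cmp]) auto
  ultimately show ?thesis
    unfolding vertex_blocks_def vertex_keys_def by (simp add: list_all2_appendI)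
qed

lemma code_components:
  assumes "b \<in> B"
  shows "fst (code b) \<subseteq> {..<r}" "snd (code b) \<in> {..<s} \<rightarrow>\<^sub>E Pow A"
proof -
  have "code b \<in> Pow {..<r} \<times> ({..<s} \<rightarrow>\<^sub>E Pow A)" using code_B assms by blast
  then show "fst (code b) \<subseteq> {..<r}" "snd (code b) \<in> {..<s} \<rightarrow>\<^sub>E Pow A"
    by (simp_all add: mem_Times_iff)
qed

lemma shares_coded_edge:
  assumes "v \<in> B" "a \<in> A" "t < s"
  shows "shares_edge I (params (3 + r + t)) (Inl v) (Inl a) \<longleftrightarrow> a \<in> snd (code v) t"
proof
  have "v \<notin> A" "a \<notin> B" using assms parts by auto
  assume "shares_edge I (params (3 + r + t)) (Inl v) (Inl a)"
  then obtain a' b' where e: "v \<in> {a', b'}" "a \<in> {a', b'}" "a' \<in> A" "b' \<in> B" "a' \<in> snd (code b') t"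
    using assms(3) unfolding shares_edge_def params_simps(5)[OF assms(3)] coded_edges_def incidence_simps
    by auto
  then have "v = b'" "a = a'" using \<open>v \<notin> A\<close> \<open>a \<notin> B\<close> by auto
  with e show "a \<in> snd (code v) t" by simp
next
  assume "a \<in> snd (code v) t"
  then have "{a, v} \<in> coded_edges t" "{a, v} \<in> E" "a \<in> V" "v \<in> V"
    using assms complete parts unfolding coded_edges_def by auto
  then show "shares_edge I (params (3 + r + t)) (Inl v) (Inl a)"
    unfolding shares_edge_def params_simps(5)[OF assms(3)] incidence_simps
    by (intro bexI[of _ "Inr {a, v}"]) auto
qed

lemma subset_key_code:
  assumes vw: "v \<in> B" "w \<in> B" and t: "t < s"
    and key: "subset_key (3 + r + t) (Inl v) = subset_key (3 + r + t) (Inl w)"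
  shows "snd (code v) t = snd (code w) t"
proof -
  have "{p \<in> Inl ` A. shares_edge I (params (3 + r + t)) (Inl v) p}
      = {p \<in> Inl ` A. shares_edge I (params (3 + r + t)) (Inl w) p}"
    using binval_inj[OF finite_imageI[OF finite_A] inj_on_stair_key key[unfolded subset_key_def]] .
  then have "a \<in> snd (code v) t \<longleftrightarrow> a \<in> snd (code w) t" if "a \<in> A" for a
    using shares_coded_edge[OF vw(1) that t] shares_coded_edge[OF vw(2) that t] that by blast
  moreover have "snd (code u) t \<subseteq> A" if "u \<in> B" for u
    using PiE_mem[OF code_components(2)[OF that]] t by blast
  ultimately show ?thesis using vw by blast
qed

lemma vertex_keys_determine_code:
  assumes B: "v \<in> B" "w \<in> B" and keys: "\<forall>k\<in>set vertex_keys. k (Inl v) = k (Inl w)"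
  shows "code v = code w"
proof -
  have "j \<in> fst (code v) \<longleftrightarrow> j \<in> fst (code w)" if "j < r" for j
  proof -
    have "(\<lambda>x. of_bool (x \<in> params (3 + j))) \<in> set vertex_keys"
      using that unfolding vertex_keys_def by force
    from bspec[OF keys this]
    have "of_bool (Inl v \<in> params (3 + j)) = (of_bool (Inl w \<in> params (3 + j)) :: nat)" by simp
    then show ?thesis using B that by (simp add: params_simps image_iff of_bool_eq_iff)
  qed
  moreover have "fst (code v) \<subseteq> {..<r}" "fst (code w) \<subseteq> {..<r}"
    using code_components(1) B by auto
  ultimately have "fst (code v) = fst (code w)" by blast
  moreover have "snd (code v) t = snd (code w) t" for t
  proof (cases "t < s")
    case True
    have "subset_key (3 + r + t) \<in> set vertex_keys"
      using True unfolding vertex_keys_def by force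
    then show ?thesis using subset_key_code[OF B True] keys by simp
  next
    case False
    then show ?thesis using PiE_arb[OF code_components(2)] B by simp
  qed
  ultimately show "code v = code w" by (simp add: prod_eq_iff fun_eq_iff)
qed

text \<open>The vertex keys separate the vertices: the staircase key separates A and
  distinguishes A from B (key 0), and on B the keys determine the injective code.\<close>

lemma vertex_keys_separate:
  "\<forall>x\<in>Inl ` V. \<forall>y\<in>Inl ` V. (\<forall>k\<in>set vertex_keys. k x = k y) \<longrightarrow> x = y"
proof (intro ballI impI)
  fix x y assume "x \<in> Inl ` V" "y \<in> Inl ` V" and keys: "\<forall>k\<in>set vertex_keys. k x = k y"
  then obtain v w where vw: "x = Inl v" "y = Inl w" "v \<in> V" "w \<in> V" by auto
  have stair: "stair_key x = stair_key y" using keys unfolding vertex_keys_def by simp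
  have pos: "0 < stair_key z" if "z \<in> Inl ` A" for z
    using that A_enum stair_key_enum by auto
  show "x = y"
  proof (cases "x \<in> Inl ` A")
    case True
    with stair pos stair_key_outside have "y \<in> Inl ` A" by (metis less_irrefl)
    with True stair show "x = y" using inj_on_stair_key by (auto dest: inj_onD)
  next
    case False
    with stair pos stair_key_outside have "y \<notin> Inl ` A" by (metis less_irrefl)
    with False vw parts have B: "v \<in> B" "w \<in> B" by auto
    have "code v = code w"
      using vertex_keys_determine_code[OF B] keys vw by simp
    with B vw show "x = y" using inj_code by (auto dest: inj_onD)
  qed
qed

lemma params_order:
  "linear_order_on (fst I) {(a, b). a \<in> fst I \<and> b \<in> fst I \<and>
     sat I (\<lambda>i. if i = 0 then a else b) params (incidence_order (vertex_blocks r s))}"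
  by (rule incidence_order_linear[OF graph vertex_blocks_define_keys vertex_keys_separate]) simp_all

end

text \<open>Every extension of K_{n,m} with m \<le> 2^(sn+r) admits a coding: there are
  exactly 2^r * (2^n)^s codes.\<close>

lemma coded_bipartite_exists:
  assumes graph: "finite_graph (V, E)" and nm: "n \<le> m" "m \<le> 2 ^ (s * n + r)"
    and ext: "extends_Knm (V, E) n m"
  shows "\<exists>A B f g code. coded_bipartite V E A B n s r f g code"
proof -
  obtain A B where AB: "A \<inter> B = {}" "A \<union> B = V" "card A = n" "card B = m"
    "\<forall>a\<in>A. \<forall>b\<in>B. {a, b} \<in> E" using ext unfolding extends_Knm_def by auto
  have fin: "finite A" "finite B" using finite_graph_vertices[OF graph] AB(2) by (metis finite_Un)+
  obtain f where f: "bij_betw f {0..<n} A" using ex_bij_betw_nat_finite[OF fin(1)] AB(3) by auto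
  obtain g where g: "g ` {0..<n} \<subseteq> B" "inj_on g {0..<n}"
    using card_le_inj[of "{0..<n}" B] fin AB(4) nm(1) by auto
  define Codes where "Codes = Pow {..<r} \<times> ({..<s} \<rightarrow>\<^sub>E Pow A)"
  have "card Codes = 2 ^ r * (2 ^ n) ^ s"
    unfolding Codes_def using fin AB(3) by (simp add: card_cartesian_product card_PiE card_Pow)
  also have "\<dots> = 2 ^ (s * n + r)" by (simp add: power_add power_mult mult.commute)
  finally have "card B \<le> card Codes" using AB(4) nm(2) by simp
  moreover have "finite Codes" unfolding Codes_def using fin by (simp add: finite_PiE)
  ultimately obtain code where "code ` B \<subseteq> Codes" "inj_on code B"
    using card_le_inj[OF fin(2)] by blast
  with graph AB f g have "coded_bipartite V E A B n s r f g code"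
    unfolding Codes_def by unfold_locales auto
  then show ?thesis by blast
qed

theorem lemma4p25:
  fixes s r :: nat and C :: "'v graph set"
  assumes "\<forall>G \<in> C. finite_graph G \<and>
             (\<exists>n m. n \<le> m \<and> m \<le> 2 ^ (s * n + r) \<and> extends_Knm G n m)"
  shows "MSO2_orderable C"
  unfolding MSO2_orderable_def
proof (intro exI)
  let ?\<phi> = "incidence_order (vertex_blocks r s)"
  show "defines_order ?\<phi> (3 + r + s) (incidence ` C)"
    unfolding defines_order_def
  proof (intro conjI ballI impI)
    show "fo_free ?\<phi> \<subseteq> {0, 1}" "so_free ?\<phi> \<subseteq> {..<3 + r + s}"
      using incidence_order_free[OF vertex_blocks_binary] by blast+
    fix S assume "S \<in> incidence ` C"
    then obtain V E where G: "(V, E) \<in> C" and S: "S = incidence (V, E)" by auto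
    with assms obtain n m where "finite_graph (V, E)" "n \<le> m" "m \<le> 2 ^ (s * n + r)"
      "extends_Knm (V, E) n m" by blast
    then obtain A B f g code where coding: "coded_bipartite V E A B n s r f g code"
      using coded_bipartite_exists by blast
    show "\<exists>P. (\<forall>i<3 + r + s. P i \<subseteq> fst S) \<and> linear_order_on (fst S)
        {(a, b). a \<in> fst S \<and> b \<in> fst S \<and> sat S (\<lambda>i. if i = 0 then a else b) P ?\<phi>}"
      unfolding S using coded_bipartite.params_subset[OF coding]
        coded_bipartite.params_order[OF coding] by blast
  qed
qed

end
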